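(* Let $a>1$ be an integer that is a zero divisor in $\mathbb{Z}/m\mathbb{Z}$, let $k\ge 1$ with $a^k\mid m$, and let $(K_n,\alpha)$ be an edge-labeled complete graph over $\mathbb{Z}/m\mathbb{Z}$ with ordered edge labels $a^{i_1},a^{i_2},\dots,a^{i_{r_n}}$. (1) If $a^{i_{r_n}}\mid a^{i_{r_n-1}}\mid\cdots\mid a^{i_2}\mid a^{i_1}\mid a^k$ with $i_{r_n}\ge1$ and $i_1<k$, then the set consisting of $(1,\dots,1)$ together with, for each $j=2,\dots,n$, the vector with $a^{i_{r_{j-1}+1}}$ at $v_j$ and $0$ elsewhere, is a minimum flow-up generating set of $[\mathbb{Z}/m\mathbb{Z}]_{(K_n,\alpha)}$; thus the rank is $n$. (2) If $a^{i_1}\mid a^{i_2}\mid\cdots\mid a^{i_{r_n}}\mid a^k$ with $i_1\ge1$ and $i_{r_n}<k$, then the set consisting of $(1,\dots,1)$ together with, for each $j=2,\dots,n$, the vector with entries $a^{i_{r_n-(n-j)}}$ at $v_j,\dots,v_n$ and $0$ at $v_1,\dots,v_{j-1}$, is a minimum flow-up generating set of $[\mathbb{Z}/m\mathbb{Z}]_{(K_n,\alpha)}$; thus the rank is $n$.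
   Context: A spline on an edge-labeled graph $(G,\alpha)$ over $\mathbb{Z}/m\mathbb{Z}$ (edges labeled by nonzero ideals) is a vector $(f_{v_1},\dots,f_{v_n})\in(\mathbb{Z}/m\mathbb{Z})^n$ with $f_{v_i}-f_{v_j}\in\alpha(v_iv_j)$ for every edge; the splines form a $\mathbb{Z}$-module $[\mathbb{Z}/m\mathbb{Z}]_{(G,\alpha)}$. An $i$-th flow-up class is a spline with $f_{v_i}\ne0$ and $f_{v_t}=0$ for $t<i$. A minimum generating set is a generating set of the $\mathbb{Z}$-module of smallest size (the rank); a minimum flow-up generating set is one consisting of flow-up classes. $K_n$ is the complete graph on $v_1,\dots,v_n$; $r_k=k(k-1)/2$; for $1\le j<k\le n$ the edge $v_jv_k$ is $e_{r_{k-1}+j}$. "Ordered edge labels $l_1,\dots,l_{r_n}$" means $\alpha(e_s)$ is the ideal generated by $l_s+m\mathbb{Z}$. Vectors are written $(f_{v_1},\dots,f_{v_n})$. *)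

theory Defs
  imports "HOL-Number_Theory.Cong"
begin

text \<open>Elements of Z/mZ are represented by their canonical residues in {0..<m};
  a vector (f_{v_1},...,f_{v_n}) is a list of length n (vertex v_i is list index i-1).\<close>

definition r :: "nat \<Rightarrow> nat" where
  "r k = k * (k - 1) div 2"

text \<open>Edge v_j v_k (j<k) of K_n is e_{r(k-1)+j}; its label is the ideal generated by l(r(k-1)+j) + mZ.\<close>

definition vec_mod :: "int \<Rightarrow> nat \<Rightarrow> int list set" where
  "vec_mod m n = {f. length f = n \<and> (\<forall>x\<in>set f. 0 \<le> x \<and> x < m)}"

definition splines :: "int \<Rightarrow> nat \<Rightarrow> (nat \<Rightarrow> int) \<Rightarrow> int list set" where
  "splines m n l = {f \<in> vec_mod m n.
     \<forall>j k. 1 \<le> j \<and> j < k \<and> k \<le> n \<longrightarrow>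
       (\<exists>c. [f ! (j - 1) - f ! (k - 1) = c * l (r (k - 1) + j)] (mod m))}"

definition zspan :: "int \<Rightarrow> nat \<Rightarrow> int list set \<Rightarrow> int list set" where
  "zspan m n S = {f \<in> vec_mod m n. \<exists>F c. finite F \<and> F \<subseteq> S \<and>
       (\<forall>i<n. [f ! i = (\<Sum>g\<in>F. c g * g ! i)] (mod m))}"

definition is_gen_set :: "int \<Rightarrow> nat \<Rightarrow> (nat \<Rightarrow> int) \<Rightarrow> int list set \<Rightarrow> bool" where
  "is_gen_set m n l S \<longleftrightarrow> S \<subseteq> splines m n l \<and> splines m n l \<subseteq> zspan m n S"

definition is_min_gen_set :: "int \<Rightarrow> nat \<Rightarrow> (nat \<Rightarrow> int) \<Rightarrow> int list set \<Rightarrow> bool" where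
  "is_min_gen_set m n l S \<longleftrightarrow> is_gen_set m n l S \<and> finite S \<and>
     (\<forall>S'. is_gen_set m n l S' \<and> finite S' \<longrightarrow> card S \<le> card S')"

definition spline_rank :: "int \<Rightarrow> nat \<Rightarrow> (nat \<Rightarrow> int) \<Rightarrow> nat" where
  "spline_rank m n l = (LEAST c. \<exists>S. is_gen_set m n l S \<and> finite S \<and> card S = c)"

definition is_flow_up :: "int \<Rightarrow> nat \<Rightarrow> (nat \<Rightarrow> int) \<Rightarrow> nat \<Rightarrow> int list \<Rightarrow> bool" where
  "is_flow_up m n l i f \<longleftrightarrow> f \<in> splines m n l \<and> 1 \<le> i \<and> i \<le> n \<and>
     f ! (i - 1) \<noteq> 0 \<and> (\<forall>t. 1 \<le> t \<and> t < i \<longrightarrow> f ! (t - 1) = 0)"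

definition is_min_flow_up_gen_set :: "int \<Rightarrow> nat \<Rightarrow> (nat \<Rightarrow> int) \<Rightarrow> int list set \<Rightarrow> bool" where
  "is_min_flow_up_gen_set m n l S \<longleftrightarrow> is_min_gen_set m n l S \<and>
     (\<forall>f\<in>S. \<exists>i. is_flow_up m n l i f)"

definition zero_divisor_mod :: "int \<Rightarrow> int \<Rightarrow> bool" where
  "zero_divisor_mod m a \<longleftrightarrow> \<not> [a = 0] (mod m) \<and> (\<exists>b. \<not> [b = 0] (mod m) \<and> [a * b = 0] (mod m))"

end

theory Submission
  imports Defs "HOL-Library.FuncSet"
begin

(* Index the vertices from 0 and replace a vector f by its step coordinates f_0 and
  f_s - f_(p s) for s > 0, where p s = 0 in case (1) and p s = s - 1 in case (2); this change
  of coordinates is unitriangular. The edge conditions put the s-th step coordinate of every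
  spline into the ideal of a single label D_s (that of v_1 v_(s+1), resp. of v_s v_n), and the
  proposed generators have step coordinates D_s e_s, so they generate and are flow-up classes.
  Since all exponents are below k, a D_s divides m, so the s-th step coordinate divided by D_s
  is well defined modulo a. Given a generating set S', the a^n splines sum_s x_s h_s with
  0 <= x_s < a are therefore told apart by the residues mod a of their coefficients along S',
  whence a^n <= a^|S'|. *)

lemma r_Suc: "r (Suc p) = r p + p"
proof -
  have "Suc p * p = p * (p - 1) + 2 * p" by (cases p) (auto simp: algebra_simps)
  then show ?thesis unfolding r_def by simp
qed

lemma r_mono: "p \<le> q \<Longrightarrow> r p \<le> r q"
  unfolding r_def by (intro div_le_mono mult_le_mono diff_le_mono) auto

lemma edge_index_le: "j < k \<Longrightarrow> k \<le> n \<Longrightarrow> r (k - 1) + j \<le> r n"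
  using r_Suc[of "k - 1"] r_mono[of k n] by simp

lemma dvd_chain_desc:
  fixes f :: "nat \<Rightarrow> 'a::comm_monoid_mult"
  assumes "\<forall>s. 1 \<le> s \<and> s < N \<longrightarrow> f (s + 1) dvd f s" "1 \<le> s" "s \<le> t" "t \<le> N"
  shows "f t dvd f s"
  using assms(3,4)
proof (induction t rule: dec_induct)
  case (step t)
  then show ?case using assms(1,2) dvd_trans[of "f (Suc t)" "f t" "f s"] by simp
qed simp

lemma dvd_chain_asc:
  fixes f :: "nat \<Rightarrow> 'a::comm_monoid_mult"
  assumes "\<forall>s. 1 \<le> s \<and> s < N \<longrightarrow> f s dvd f (s + 1)" "1 \<le> s" "s \<le> t" "t \<le> N"
  shows "f s dvd f t"
  using assms(3,4)
proof (induction t rule: dec_induct)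
  case (step t)
  then show ?case using assms(1,2) dvd_trans[of "f s" "f t" "f (Suc t)"] by simp
qed simp

lemma cong_multiple_dvd_trans:
  fixes x d d' m :: int
  assumes "[x = c * d] (mod m)" "d' dvd d"
  shows "\<exists>c'. [x = c' * d'] (mod m)"
proof -
  obtain q where "d = d' * q" using assms(2) by (auto simp: dvd_def)
  then have "[x = (c * q) * d'] (mod m)" using assms(1) by (simp add: ac_simps)
  then show ?thesis by blast
qed

lemma cong_diff_swap: "[x - y = c * L] (mod m) \<Longrightarrow> [y - x = (- c) * L] (mod (m::int))"
  by (metis cong_minus_minus_iff minus_diff_eq mult_minus_left)

lemma cong_cancel_factor:
  fixes u v d a m :: int
  assumes "a * d dvd m" "d \<noteq> 0" "[u * d = v * d] (mod m)"
  shows "[u = v] (mod a)"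
proof -
  have "[u * d = v * d] (mod a * d)" using assms(3,1) by (rule cong_dvd_modulus)
  then have "a * d dvd (u - v) * d" by (simp add: cong_iff_dvd_diff left_diff_distrib)
  then show ?thesis using assms(2) by (simp add: cong_iff_dvd_diff)
qed

lemma mod_eq_self_if_factor_dvd:
  fixes a d m :: int
  assumes "1 < a" "0 < m" "0 < d" "a * d dvd m"
  shows "d mod m = d"
proof -
  have "d < a * d" using assms by simp
  also have "\<dots> \<le> m" using assms by (intro zdvd_imp_le) auto
  finally show ?thesis using assms by simp
qed

lemma card_le_card_if_inj_PiE:
  fixes a :: int
  assumes "1 < a" "finite A" "finite B"
    and "inj_on \<Phi> (A \<rightarrow>\<^sub>E {0..<a})" "\<Phi> ` (A \<rightarrow>\<^sub>E {0..<a}) \<subseteq> B \<rightarrow>\<^sub>E {0..<a}"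
  shows "card A \<le> card B"
proof -
  have "card (A \<rightarrow>\<^sub>E {0..<a}) \<le> card (B \<rightarrow>\<^sub>E {0..<a})"
    using assms by (intro card_inj_on_le finite_PiE) auto
  then have "nat a ^ card A \<le> nat a ^ card B"
    using assms by (simp add: card_PiE)
  moreover have "1 < nat a" using assms(1) by simp
  ultimately show ?thesis using power_le_imp_le_exp by blast
qed

lemma splines_edge:
  assumes "f \<in> splines m n l" "1 \<le> j" "j < k" "k \<le> n"
  shows "\<exists>c. [f ! (j - 1) - f ! (k - 1) = c * l (r (k - 1) + j)] (mod m)"
  using assms unfolding splines_def by blast

lemma lincomb_mod_in_splines:
  assumes "0 < m" "finite T" "\<And>t. t \<in> T \<Longrightarrow> h t \<in> splines m n l"
  shows "map (\<lambda>i. (\<Sum>t\<in>T. c t * h t ! i) mod m) [0..<n] \<in> splines m n l"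
proof -
  let ?f = "map (\<lambda>i. (\<Sum>t\<in>T. c t * h t ! i) mod m) [0..<n]"
  have "\<exists>c'. [?f ! (j - 1) - ?f ! (k - 1) = c' * l (r (k - 1) + j)] (mod m)"
    if jk: "1 \<le> j" "j < k" "k \<le> n" for j k
  proof -
    let ?L = "l (r (k - 1) + j)"
    have "\<forall>t\<in>T. \<exists>c. [h t ! (j - 1) - h t ! (k - 1) = c * ?L] (mod m)"
      using splines_edge[OF assms(3) jk] by blast
    then obtain C where C: "\<forall>t\<in>T. [h t ! (j - 1) - h t ! (k - 1) = C t * ?L] (mod m)"
      by (rule bchoice[THEN exE])
    have "j - 1 < n" "k - 1 < n" using jk by auto
    then have "[?f ! (j - 1) - ?f ! (k - 1)
        = (\<Sum>t\<in>T. c t * h t ! (j - 1)) - (\<Sum>t\<in>T. c t * h t ! (k - 1))] (mod m)"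
      by (simp add: cong_def mod_diff_eq)
    also have "(\<Sum>t\<in>T. c t * h t ! (j - 1)) - (\<Sum>t\<in>T. c t * h t ! (k - 1))
        = (\<Sum>t\<in>T. c t * (h t ! (j - 1) - h t ! (k - 1)))"
      by (simp add: sum_subtractf right_diff_distrib)
    also have "[(\<Sum>t\<in>T. c t * (h t ! (j - 1) - h t ! (k - 1))) = (\<Sum>t\<in>T. c t * (C t * ?L))] (mod m)"
      using C by (intro cong_sum cong_mult cong_refl) auto
    also have "(\<Sum>t\<in>T. c t * (C t * ?L)) = (\<Sum>t\<in>T. c t * C t) * ?L"
      by (simp add: sum_distrib_right ac_simps)
    finally show ?thesis by blast
  qed
  then show ?thesis using assms(1) by (auto simp: splines_def vec_mod_def)
qed

lemma zspan_ex_coeffs: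
  assumes "f \<in> zspan m n S" "finite S"
  shows "\<exists>c. \<forall>i<n. [f ! i = (\<Sum>g\<in>S. c g * g ! i)] (mod m)"
proof -
  obtain F c where F: "finite F" "F \<subseteq> S" "\<forall>i<n. [f ! i = (\<Sum>g\<in>F. c g * g ! i)] (mod m)"
    using assms(1) unfolding zspan_def by blast
  have "(\<Sum>g\<in>S. (if g \<in> F then c g else 0) * g ! i) = (\<Sum>g\<in>F. c g * g ! i)" for i
  proof -
    have "(\<Sum>g\<in>S. (if g \<in> F then c g else 0) * g ! i) = (\<Sum>g\<in>F. (if g \<in> F then c g else 0) * g ! i)"
      using F(2) assms(2) by (intro sum.mono_neutral_right) auto
    then show ?thesis by simp
  qed
  then show ?thesis using F(3) by (intro exI[of _ "\<lambda>g. if g \<in> F then c g else 0"]) simp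
qed

lemma in_zspan_imageI:
  assumes "finite T" "inj_on h T" "f \<in> vec_mod m n"
    and "\<forall>i<n. [f ! i = (\<Sum>t\<in>T. c t * h t ! i)] (mod m)"
  shows "f \<in> zspan m n (h ` T)"
proof -
  have "(\<Sum>g\<in>h ` T. c (inv_into T h g) * g ! i) = (\<Sum>t\<in>T. c t * h t ! i)" for i
    using assms(2) by (simp add: sum.reindex)
  then show ?thesis
    using assms unfolding zspan_def
    by (intro CollectI conjI exI[of _ "h ` T"] exI[of _ "\<lambda>g. c (inv_into T h g)"]) auto
qed

lemma min_flow_up_gen_set_and_rankI:
  assumes "is_gen_set m n l S" "finite S" "card S = n" "\<forall>f\<in>S. \<exists>i. is_flow_up m n l i f"
    and "\<And>S'. is_gen_set m n l S' \<Longrightarrow> finite S' \<Longrightarrow> n \<le> card S'"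
  shows "is_min_flow_up_gen_set m n l S \<and> spline_rank m n l = n"
  unfolding is_min_flow_up_gen_set_def is_min_gen_set_def spline_rank_def
  using assms by (auto intro!: Least_equality)

definition step_diff :: "(nat \<Rightarrow> nat) \<Rightarrow> (nat \<Rightarrow> int) \<Rightarrow> nat \<Rightarrow> int" where
  "step_diff p v s = (if s = 0 then v 0 else v s - v (p s))"

lemma step_diff_sum:
  "step_diff p (\<lambda>i. \<Sum>g\<in>G. c g * v g i) s = (\<Sum>g\<in>G. c g * step_diff p (v g) s)"
  by (simp add: step_diff_def sum_subtractf right_diff_distrib)

(* Vertex v_(s+1) has index s; h 0 is the constant generator and D 0 = 1. *)
locale triangular_spline_basis =
  fixes m :: int and n :: nat and l :: "nat \<Rightarrow> int" and a :: int
    and p :: "nat \<Rightarrow> nat" and D :: "nat \<Rightarrow> int" and h :: "nat \<Rightarrow> int list"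
  assumes m_pos: "0 < m" and a_gt_1: "1 < a"
    and parent_less: "\<And>s. 0 < s \<Longrightarrow> p s < s"
    and D_pos: "\<And>s. s < n \<Longrightarrow> 0 < D s"
    and a_D_dvd: "\<And>s. s < n \<Longrightarrow> a * D s dvd m"
    and h_splines: "\<And>t. t < n \<Longrightarrow> h t \<in> splines m n l"
    and step_diff_h: "\<And>s t. s < n \<Longrightarrow> t < n \<Longrightarrow>
      step_diff p (nth (h t)) s = (if s = t then D s else 0)"
    and step_diff_splines: "\<And>f s. f \<in> splines m n l \<Longrightarrow> s < n \<Longrightarrow>
      \<exists>c. [step_diff p (nth f) s = c * D s] (mod m)"
begin

lemma step_diff_cong:
  assumes "\<And>i. i < n \<Longrightarrow> [v i = w i] (mod m)" "s < n"
  shows "[step_diff p v s = step_diff p w s] (mod m)"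
  using assms parent_less[of s] by (auto simp: step_diff_def intro: cong_diff)

lemma cong_if_step_diff_cong:
  assumes "\<And>s. s < n \<Longrightarrow> [step_diff p v s = step_diff p w s] (mod m)"
  shows "s < n \<Longrightarrow> [v s = w s] (mod m)"
proof (induction s rule: less_induct)
  case (less s)
  show ?case
  proof (cases "s = 0")
    case True
    then show ?thesis using assms[OF less.prems] by (simp add: step_diff_def)
  next
    case False
    then have "p s < s" by (simp add: parent_less)
    then have "[step_diff p v s + v (p s) = step_diff p w s + w (p s)] (mod m)"
      using assms[OF less.prems] less by (intro cong_add) auto
    then show ?thesis using False by (simp add: step_diff_def)
  qed
qed

lemma h_nth_below: "t < n \<Longrightarrow> s < t \<Longrightarrow> h t ! s = 0"
proof (induction s rule: less_induct)
  case (less s)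
  have "step_diff p (nth (h t)) s = 0" using less.prems step_diff_h[of s t] by simp
  then show ?case using less parent_less[of s] by (auto simp: step_diff_def split: if_splits)
qed

lemma h_nth_self: "t < n \<Longrightarrow> h t ! t = D t"
  using step_diff_h[of t t] h_nth_below[of t "p t"] parent_less[of t]
  by (auto simp: step_diff_def split: if_splits)

lemma flow_up_h:
  assumes "t < n"
  shows "is_flow_up m n l (Suc t) (h t)"
  unfolding is_flow_up_def
proof (intro conjI allI impI)
  show "h t \<in> splines m n l" using h_splines assms .
  show "h t ! (Suc t - 1) \<noteq> 0" using h_nth_self D_pos assms by (simp add: less_le)
  fix s assume "1 \<le> s \<and> s < Suc t"
  then have "s - 1 < t" by linarith
  then show "h t ! (s - 1) = 0" using h_nth_below assms by simp
qed (use assms in simp_all)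

lemma inj_on_h: "inj_on h {..<n}"
proof (rule inj_onI)
  fix s t assume "s \<in> {..<n}" "t \<in> {..<n}" "h s = h t"
  then have "step_diff p (nth (h t)) s = D s" using step_diff_h[of s s] by simp
  then show "s = t" using step_diff_h[of s t] D_pos[of s] \<open>s \<in> {..<n}\<close> \<open>t \<in> {..<n}\<close>
    by (auto split: if_splits)
qed

lemma splines_subset_zspan_h: "splines m n l \<subseteq> zspan m n (h ` {..<n})"
proof
  fix f assume f: "f \<in> splines m n l"
  obtain c where c: "\<forall>s<n. [step_diff p (nth f) s = c s * D s] (mod m)"
    using step_diff_splines[OF f] by metis
  have "step_diff p (\<lambda>i. \<Sum>t<n. c t * h t ! i) s = c s * D s" if "s < n" for s
    using that by (simp add: step_diff_sum step_diff_h if_distrib cong: if_cong)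
  then have "\<forall>i<n. [f ! i = (\<Sum>t<n. c t * h t ! i)] (mod m)"
    using c by (auto intro: cong_if_step_diff_cong)
  then show "f \<in> zspan m n (h ` {..<n})"
    using f inj_on_h by (intro in_zspan_imageI) (auto simp: splines_def)
qed

lemma lincomb_h_coeff_cong:
  assumes "s < n"
    and c: "\<And>g. g \<in> S \<Longrightarrow> [step_diff p (nth g) s = c g * D s] (mod m)"
    and comb: "\<And>i. i < n \<Longrightarrow> [(\<Sum>t<n. x t * h t ! i) = (\<Sum>g\<in>S. C g * g ! i)] (mod m)"
  shows "[x s = (\<Sum>g\<in>S. C g * c g)] (mod a)"
proof -
  have "x s * D s = step_diff p (\<lambda>i. \<Sum>t<n. x t * h t ! i) s"
    using assms(1) by (simp add: step_diff_sum step_diff_h if_distrib cong: if_cong)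
  also have "[\<dots> = step_diff p (\<lambda>i. \<Sum>g\<in>S. C g * g ! i) s] (mod m)"
    using assms(1) comb by (rule step_diff_cong[rotated])
  also have "step_diff p (\<lambda>i. \<Sum>g\<in>S. C g * g ! i) s = (\<Sum>g\<in>S. C g * step_diff p (nth g) s)"
    by (rule step_diff_sum)
  also have "[\<dots> = (\<Sum>g\<in>S. C g * (c g * D s))] (mod m)"
    using c by (intro cong_sum cong_mult cong_refl)
  also have "(\<Sum>g\<in>S. C g * (c g * D s)) = (\<Sum>g\<in>S. C g * c g) * D s"
    by (simp add: sum_distrib_right mult.assoc)
  finally show ?thesis
    using a_D_dvd[OF assms(1)] D_pos[OF assms(1)] by (intro cong_cancel_factor[of a "D s" m]) auto
qed

lemma card_generating_set_ge:
  assumes gen: "is_gen_set m n l S" and fin: "finite S"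
  shows "n \<le> card S"
proof -
  let ?X = "{..<n} \<rightarrow>\<^sub>E {0..<a}"
  have "\<exists>C. \<forall>i<n. [(\<Sum>t<n. x t * h t ! i) = (\<Sum>g\<in>S. C g * g ! i)] (mod m)" for x
  proof -
    let ?H = "map (\<lambda>i. (\<Sum>t<n. x t * h t ! i) mod m) [0..<n]"
    have "?H \<in> zspan m n S"
      using gen m_pos h_splines lincomb_mod_in_splines[of m "{..<n}" h n l x]
      unfolding is_gen_set_def by auto
    then obtain C where "\<forall>i<n. [?H ! i = (\<Sum>g\<in>S. C g * g ! i)] (mod m)"
      using zspan_ex_coeffs fin by blast
    then show ?thesis by (auto simp: cong_def)
  qed
  then obtain C where C: "\<And>x i. i < n \<Longrightarrow> [(\<Sum>t<n. x t * h t ! i) = (\<Sum>g\<in>S. C x g * g ! i)] (mod m)"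
    by metis
  have "\<forall>g\<in>S. \<exists>cg. \<forall>s<n. [step_diff p (nth g) s = cg s * D s] (mod m)"
    using gen step_diff_splines unfolding is_gen_set_def by (metis subsetD)
  then obtain c where c: "\<And>g s. g \<in> S \<Longrightarrow> s < n \<Longrightarrow> [step_diff p (nth g) s = c g s * D s] (mod m)"
    by metis
  define \<Phi> where "\<Phi> x = restrict (\<lambda>g. C x g mod a) S" for x
  have "inj_on \<Phi> ?X"
  proof (rule inj_onI)
    fix x y assume x: "x \<in> ?X" and y: "y \<in> ?X" and eq: "\<Phi> x = \<Phi> y"
    have C_cong: "[C x g = C y g] (mod a)" if "g \<in> S" for g
      using fun_cong[OF eq, of g] that by (simp add: \<Phi>_def cong_def)
    have "x s = y s" if s: "s < n" for s
    proof (rule cong_less_imp_eq_int)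
      have coeff: "[z s = (\<Sum>g\<in>S. C z g * c g s)] (mod a)" for z
        using s c[OF _ s] C by (rule lincomb_h_coeff_cong)
      have "[x s = (\<Sum>g\<in>S. C x g * c g s)] (mod a)" by (rule coeff)
      also have "[(\<Sum>g\<in>S. C x g * c g s) = (\<Sum>g\<in>S. C y g * c g s)] (mod a)"
        using C_cong by (intro cong_sum cong_mult cong_refl)
      also have "[(\<Sum>g\<in>S. C y g * c g s) = y s] (mod a)"
        using coeff by (rule cong_sym)
      finally show "[x s = y s] (mod a)" .
    qed (use PiE_mem[OF x] PiE_mem[OF y] s in auto)
    then show "x = y" using x y by (intro PiE_ext) auto
  qed
  moreover have "\<Phi> x \<in> S \<rightarrow>\<^sub>E {0..<a}" for x
    using a_gt_1 by (simp add: \<Phi>_def restrict_PiE_iff)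
  then have "\<Phi> ` ?X \<subseteq> S \<rightarrow>\<^sub>E {0..<a}" by blast
  ultimately have "card {..<n} \<le> card S"
    by (intro card_le_card_if_inj_PiE[OF a_gt_1 _ fin]) simp_all
  then show ?thesis by simp
qed

theorem min_flow_up_gen_set_h:
  "is_min_flow_up_gen_set m n l (h ` {..<n}) \<and> spline_rank m n l = n"
proof (rule min_flow_up_gen_set_and_rankI)
  show "is_gen_set m n l (h ` {..<n})"
    using h_splines splines_subset_zspan_h unfolding is_gen_set_def by auto
  show "card (h ` {..<n}) = n" using inj_on_h by (simp add: card_image)
  show "\<forall>f\<in>h ` {..<n}. \<exists>i. is_flow_up m n l i f" using flow_up_h by blast
  show "\<And>S. is_gen_set m n l S \<Longrightarrow> finite S \<Longrightarrow> n \<le> card S"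
    by (rule card_generating_set_ge)
qed simp

end

definition scaled_indicator :: "int \<Rightarrow> nat \<Rightarrow> (nat \<Rightarrow> bool) \<Rightarrow> int \<Rightarrow> int list" where
  "scaled_indicator m n P d = map (\<lambda>i. if P i then d mod m else 0) [0..<n]"

lemma scaled_indicator_nth:
  "i < n \<Longrightarrow> scaled_indicator m n P d ! i = (if P i then d mod m else 0)"
  by (simp add: scaled_indicator_def)

lemma scaled_indicator_in_splines:
  assumes "0 < m"
    and "\<And>j k. 1 \<le> j \<Longrightarrow> j < k \<Longrightarrow> k \<le> n \<Longrightarrow> P (j - 1) \<noteq> P (k - 1) \<Longrightarrow> l (r (k - 1) + j) dvd d"
  shows "scaled_indicator m n P d \<in> splines m n l"
proof -
  let ?v = "scaled_indicator m n P d"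
  have "\<exists>c. [?v ! (j - 1) - ?v ! (k - 1) = c * l (r (k - 1) + j)] (mod m)"
    if jk: "1 \<le> j" "j < k" "k \<le> n" for j k
  proof (cases "P (j - 1) = P (k - 1)")
    case True
    then have "?v ! (j - 1) - ?v ! (k - 1) = 0 * l (r (k - 1) + j)"
      using jk by (simp add: scaled_indicator_nth)
    then show ?thesis by (metis cong_refl)
  next
    case False
    then have "l (r (k - 1) + j) dvd d" using assms(2) jk by blast
    moreover have "[?v ! (j - 1) - ?v ! (k - 1) = (if P (j - 1) then 1 else - 1) * d] (mod m)"
      using False jk by (auto simp: scaled_indicator_nth cong_def mod_minus_eq)
    ultimately show ?thesis by (metis cong_multiple_dvd_trans)
  qed
  then show ?thesis
    using assms(1) by (auto simp: splines_def vec_mod_def scaled_indicator_def)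
qed

lemma decreasing_labels_basis:
  fixes m a :: int and n :: nat and l :: "nat \<Rightarrow> int"
  defines "D \<equiv> \<lambda>s. if s = 0 then 1 else l (r s + 1)"
  assumes "0 < m" "1 < a" and l_pos: "\<And>s. 0 < l s"
    and chain: "\<forall>s. 1 \<le> s \<and> s < r n \<longrightarrow> l (s + 1) dvd l s" and a_l_dvd: "a * l 1 dvd m"
  shows "triangular_spline_basis m n l a (\<lambda>_. 0) D
    (\<lambda>t. scaled_indicator m n (\<lambda>i. t = 0 \<or> i = t) (D t))"
proof -
  have l_dvd_D: "l s dvd D t" if "0 < t" "r t + 1 \<le> s" "s \<le> r n" for s t
    using dvd_chain_desc[OF chain, of "r t + 1" s] that by (simp add: D_def)
  have D_props: "0 < D s \<and> a * D s dvd m" if "s < n" for s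
  proof (cases "s = 0")
    case False
    have "r s + 1 \<le> r n" using edge_index_le[of 1 "Suc s" n] that False by simp
    then have "a * D s dvd a * l 1" using dvd_chain_desc[OF chain, of 1 "r s + 1"] False
      by (simp add: D_def)
    then show ?thesis using a_l_dvd l_pos False by (auto simp: D_def intro: dvd_trans)
  qed (use a_l_dvd in \<open>auto simp: D_def intro: dvd_mult_left\<close>)
  have h_nth: "scaled_indicator m n P (D t) ! i = (if P i then D t else 0)"
    if "t < n" "i < n" for P t i
    using that D_props[OF that(1)] mod_eq_self_if_factor_dvd[of a m "D t"] assms(2,3)
    by (simp add: scaled_indicator_nth)
  show ?thesis
  proof unfold_locales
    fix t assume t: "t < n"
    show "scaled_indicator m n (\<lambda>i. t = 0 \<or> i = t) (D t) \<in> splines m n l"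
    proof (rule scaled_indicator_in_splines)
      fix j k assume jk: "1 \<le> j" "j < k" "k \<le> n" "(t = 0 \<or> j - 1 = t) \<noteq> (t = 0 \<or> k - 1 = t)"
      have "r t \<le> r (k - 1)" using jk by (intro r_mono) auto
      then show "l (r (k - 1) + j) dvd D t"
        using jk edge_index_le[of j k n] by (intro l_dvd_D) auto
    qed (rule assms(2))
    fix s assume s: "s < n"
    show "step_diff (\<lambda>_. 0) (nth (scaled_indicator m n (\<lambda>i. t = 0 \<or> i = t) (D t))) s
        = (if s = t then D s else 0)"
      using h_nth s t by (auto simp: step_diff_def)
  next
    fix f s assume f: "f \<in> splines m n l" and s: "s < n"
    show "\<exists>c. [step_diff (\<lambda>_. 0) (nth f) s = c * D s] (mod m)"
    proof (cases "s = 0")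
      case True
      then show ?thesis by (auto simp: step_diff_def D_def intro: cong_refl)
    next
      case False
      then obtain c where "[f ! (1 - 1) - f ! (Suc s - 1) = c * l (r (Suc s - 1) + 1)] (mod m)"
        using splines_edge[OF f, of 1 "Suc s"] s by auto
      then show ?thesis using False by (auto simp: step_diff_def D_def dest: cong_diff_swap)
    qed
  qed (use assms(2,3) D_props in auto)
qed

lemma increasing_labels_basis:
  fixes m a :: int and n :: nat and l :: "nat \<Rightarrow> int"
  defines "D \<equiv> \<lambda>s. if s = 0 then 1 else l (r (n - 1) + s)"
  assumes "0 < m" "1 < a" and l_pos: "\<And>s. 0 < l s"
    and chain: "\<forall>s. 1 \<le> s \<and> s < r n \<longrightarrow> l s dvd l (s + 1)" and a_l_dvd: "a * l (r n) dvd m"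
  shows "triangular_spline_basis m n l a (\<lambda>s. s - 1) D
    (\<lambda>t. scaled_indicator m n (\<lambda>i. t \<le> i) (D t))"
proof -
  have r_n: "r n = r (n - 1) + (n - 1)" if "0 < n" using r_Suc[of "n - 1"] that by simp
  have l_dvd_D: "l s dvd D t" if "0 < t" "t < n" "1 \<le> s" "s \<le> r (n - 1) + t" for s t
    using dvd_chain_asc[OF chain, of s "r (n - 1) + t"] that r_n by (simp add: D_def)
  have D_props: "0 < D s \<and> a * D s dvd m" if "s < n" for s
  proof (cases "s = 0")
    case False
    then have "a * D s dvd a * l (r n)"
      using dvd_chain_asc[OF chain, of "r (n - 1) + s" "r n"] that r_n by (simp add: D_def)
    then show ?thesis using a_l_dvd l_pos False by (auto simp: D_def intro: dvd_trans)
  qed (use a_l_dvd in \<open>auto simp: D_def intro: dvd_mult_left\<close>)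
  have h_nth: "scaled_indicator m n P (D t) ! i = (if P i then D t else 0)"
    if "t < n" "i < n" for P t i
    using that D_props[OF that(1)] mod_eq_self_if_factor_dvd[of a m "D t"] assms(2,3)
    by (simp add: scaled_indicator_nth)
  show ?thesis
  proof unfold_locales
    fix t assume t: "t < n"
    show "scaled_indicator m n (\<lambda>i. t \<le> i) (D t) \<in> splines m n l"
    proof (rule scaled_indicator_in_splines)
      fix j k assume jk: "1 \<le> j" "j < k" "k \<le> n" "(t \<le> j - 1) \<noteq> (t \<le> k - 1)"
      have "r (k - 1) \<le> r (n - 1)" using jk by (intro r_mono) auto
      then show "l (r (k - 1) + j) dvd D t"
        using jk t by (intro l_dvd_D) auto
    qed (rule assms(2))
    fix s assume s: "s < n"
    show "step_diff (\<lambda>s. s - 1) (nth (scaled_indicator m n (\<lambda>i. t \<le> i) (D t))) s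
        = (if s = t then D s else 0)"
      using h_nth s t by (auto simp: step_diff_def)
  next
    fix f s assume f: "f \<in> splines m n l" and s: "s < n"
    show "\<exists>c. [step_diff (\<lambda>s. s - 1) (nth f) s = c * D s] (mod m)"
    proof (cases "s = 0")
      case True
      then show ?thesis by (auto simp: step_diff_def D_def intro: cong_refl)
    next
      case False
      obtain c where c: "[f ! (s - 1) - f ! (n - 1) = c * D s] (mod m)"
        using splines_edge[OF f, of s n] s False by (auto simp: D_def)
      have "\<exists>c'. [f ! s - f ! (n - 1) = c' * D s] (mod m)"
      proof (cases "Suc s = n")
        case True
        then have "f ! s - f ! (n - 1) = 0 * D s" by auto
        then show ?thesis by (metis cong_refl)
      next
        case False
        then obtain c' where "[f ! (Suc s - 1) - f ! (n - 1) = c' * l (r (n - 1) + Suc s)] (mod m)"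
          using splines_edge[OF f, of "Suc s" n] s by auto
        moreover have "r (n - 1) + s < r n" using r_n False s by simp
        then have "D s dvd l (r (n - 1) + Suc s)" using chain \<open>s \<noteq> 0\<close> by (simp add: D_def)
        ultimately show ?thesis by (simp add: cong_multiple_dvd_trans)
      qed
      then obtain c' where "[f ! s - f ! (n - 1) = c' * D s] (mod m)" by blast
      from cong_diff[OF this c] have "[f ! s - f ! (s - 1) = (c' - c) * D s] (mod m)"
        by (simp add: algebra_simps)
      then show ?thesis using False by (auto simp: step_diff_def)
    qed
  qed (use assms(2,3) D_props in auto)
qed

lemma Un_image_atLeastAtMost_eq_image_lessThan:
  assumes "1 \<le> n" "h 0 = u" "\<And>t. 0 < t \<Longrightarrow> t < n \<Longrightarrow> h t = g (Suc t)"
  shows "{u} \<union> g ` {2..n} = h ` {..<n}"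
proof -
  have "h ` {1..<n} = (\<lambda>t. g (Suc t)) ` {1..<n}" using assms(3) by (intro image_cong) auto
  also have "\<dots> = g ` (Suc ` {1..<n})" by (simp only: image_image)
  also have "Suc ` {1..<n} = {2..n}"
    by (simp add: image_Suc_atLeastLessThan atLeastLessThanSuc_atLeastAtMost)
  finally have "h ` {1..<n} = g ` {2..n}" .
  moreover have "{..<n} = insert 0 {1..<n}" using assms(1) by auto
  ultimately show ?thesis using assms(2) by (simp only: image_insert) blast
qed

lemma decreasing_labels_min_flow_up_gen_set:
  fixes m a :: int and n :: nat and l :: "nat \<Rightarrow> int"
  assumes "0 < m" "1 < a" "1 \<le> n" "\<And>s. 0 < l s"
    and "\<forall>s. 1 \<le> s \<and> s < r n \<longrightarrow> l (s + 1) dvd l s" "a * l 1 dvd m"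
  shows "is_min_flow_up_gen_set m n l
      ({replicate n (1 mod m)} \<union>
       (\<lambda>j. map (\<lambda>t. if t = j - 1 then l (r (j - 1) + 1) mod m else 0) [0..<n]) ` {2..n})
    \<and> spline_rank m n l = n" (is "is_min_flow_up_gen_set _ _ _ ?S \<and> _")
proof -
  let ?D = "\<lambda>s. if s = 0 then 1 else l (r s + 1)"
  let ?h = "\<lambda>t. scaled_indicator m n (\<lambda>i. t = 0 \<or> i = t) (?D t)"
  interpret triangular_spline_basis m n l a "\<lambda>_. 0" ?D ?h
    using decreasing_labels_basis[OF assms(1,2,4-)] by simp
  have "?S = ?h ` {..<n}"
    using assms(3) by (intro Un_image_atLeastAtMost_eq_image_lessThan)
      (simp_all add: scaled_indicator_def map_replicate_const)
  then show ?thesis using min_flow_up_gen_set_h by simp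
qed

lemma increasing_labels_min_flow_up_gen_set:
  fixes m a :: int and n :: nat and l :: "nat \<Rightarrow> int"
  assumes "0 < m" "1 < a" "1 \<le> n" "\<And>s. 0 < l s"
    and "\<forall>s. 1 \<le> s \<and> s < r n \<longrightarrow> l s dvd l (s + 1)" "a * l (r n) dvd m"
  shows "is_min_flow_up_gen_set m n l
      ({replicate n (1 mod m)} \<union>
       (\<lambda>j. map (\<lambda>t. if t < j - 1 then 0 else l (r n - (n - j)) mod m) [0..<n]) ` {2..n})
    \<and> spline_rank m n l = n" (is "is_min_flow_up_gen_set _ _ _ ?S \<and> _")
proof -
  let ?D = "\<lambda>s. if s = 0 then 1 else l (r (n - 1) + s)"
  let ?h = "\<lambda>t. scaled_indicator m n (\<lambda>i. t \<le> i) (?D t)"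
  interpret triangular_spline_basis m n l a "\<lambda>s. s - 1" ?D ?h
    using increasing_labels_basis[OF assms(1,2,4-)] by simp
  have "r n - (n - Suc t) = r (n - 1) + t" if "t < n" for t
    using r_Suc[of "n - 1"] that by simp
  then have "?S = ?h ` {..<n}"
    using assms(3) by (intro Un_image_atLeastAtMost_eq_image_lessThan)
      (auto simp: scaled_indicator_def map_replicate_const not_less)
  then show ?thesis using min_flow_up_gen_set_h by simp
qed

theorem mainTheorem5:
  fixes m a :: int and k n :: nat and e :: "nat \<Rightarrow> nat"
  assumes "0 < m" and "a > 1" and "zero_divisor_mod m a"
    and "k \<ge> 1" and "a ^ k dvd m" and "n \<ge> 2"
  defines "l \<equiv> (\<lambda>s. a ^ e s)"
  shows
   "((\<forall>s. 1 \<le> s \<and> s < r n \<longrightarrow> a ^ e (s + 1) dvd a ^ e s) \<and> a ^ e 1 dvd a ^ k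
       \<and> e (r n) \<ge> 1 \<and> e 1 < k \<longrightarrow>
     is_min_flow_up_gen_set m n l
       ({replicate n (1 mod m)} \<union>
        (\<lambda>j. map (\<lambda>t. if t = j - 1 then a ^ e (r (j - 1) + 1) mod m else 0) [0..<n]) ` {2..n})
     \<and> spline_rank m n l = n)
  \<and> ((\<forall>s. 1 \<le> s \<and> s < r n \<longrightarrow> a ^ e s dvd a ^ e (s + 1)) \<and> a ^ e (r n) dvd a ^ k
       \<and> e 1 \<ge> 1 \<and> e (r n) < k \<longrightarrow>
     is_min_flow_up_gen_set m n l
       ({replicate n (1 mod m)} \<union>
        (\<lambda>j. map (\<lambda>t. if t < j - 1 then 0 else a ^ e (r n - (n - j)) mod m) [0..<n]) ` {2..n})
     \<and> spline_rank m n l = n)"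
proof -
  have l_pos: "\<And>s. 0 < l s" using assms(2) by (simp add: l_def)
  have a_l_dvd: "a * l s dvd m" if "e s < k" for s
  proof -
    have "a * l s = a ^ Suc (e s)" by (simp add: l_def)
    also have "\<dots> dvd a ^ k" using that by (intro le_imp_power_dvd) simp
    finally show ?thesis using assms(5) by (rule dvd_trans)
  qed
  have n: "1 \<le> n" using assms(6) by simp
  show ?thesis
    using decreasing_labels_min_flow_up_gen_set[of m a n l, OF assms(1,2) n l_pos]
      increasing_labels_min_flow_up_gen_set[of m a n l, OF assms(1,2) n l_pos]
      a_l_dvd[of 1] a_l_dvd[of "r n"]
    unfolding l_def by simp
qed

end
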